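(* Let $\pi$ be a group, $\Lambda=\mathbb{Z}[\pi]$, and let $D_2\xrightarrow{d_2}D_1\xrightarrow{d_1}D_0$ be a sequence of finitely generated projective $\Lambda$-modules that is exact at $D_1$. Let $d^2\colon D^1\to D^2$ be the dual of $d_2$ and let $f\colon L\to D^1$ be a $\Lambda$-homomorphism with image $f(L)=\ker d^2$. Then $$D_2\xrightarrow{d_2}D_1\xrightarrow{f^*}\operatorname{Hom}_\Lambda(L,\Lambda)$$ is exact at $D_1$.
   Context: $D^i=\operatorname{Hom}_\Lambda(D_i,\Lambda)$, and $D_1$ is identified with its double dual $\operatorname{Hom}_\Lambda(D^1,\Lambda)$ via the canonical isomorphism (valid for finitely generated projective modules), so that $f^*\colon D_1\cong\operatorname{Hom}_\Lambda(D^1,\Lambda)\to\operatorname{Hom}_\Lambda(L,\Lambda)$. *)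

theory Defs
  imports Main "HOL-Library.Poly_Mapping" "HOL-Library.Function_Algebras"
begin

text \<open>Left modules over a ring 'r, given by a carrier set inside an abelian group type
  (addition, zero, negation inherited from the type) and a scalar multiplication.\<close>

definition lmodule :: "'m set \<Rightarrow> ('r::ring_1 \<Rightarrow> 'm::ab_group_add \<Rightarrow> 'm) \<Rightarrow> bool" where
  "lmodule M s \<longleftrightarrow>
     0 \<in> M \<and> (\<forall>x\<in>M. \<forall>y\<in>M. x + y \<in> M) \<and> (\<forall>x\<in>M. - x \<in> M) \<and>
     (\<forall>r. \<forall>x\<in>M. s r x \<in> M) \<and>
     (\<forall>r. \<forall>x\<in>M. \<forall>y\<in>M. s r (x + y) = s r x + s r y) \<and>
     (\<forall>r q. \<forall>x\<in>M. s (r + q) x = s r x + s q x) \<and>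
     (\<forall>r q. \<forall>x\<in>M. s (r * q) x = s r (s q x)) \<and>
     (\<forall>x\<in>M. s 1 x = x)"

definition lhom :: "'m set \<Rightarrow> ('r::ring_1 \<Rightarrow> 'm::ab_group_add \<Rightarrow> 'm) \<Rightarrow>
    'n set \<Rightarrow> ('r \<Rightarrow> 'n::ab_group_add \<Rightarrow> 'n) \<Rightarrow> ('m \<Rightarrow> 'n) \<Rightarrow> bool" where
  "lhom M s N t h \<longleftrightarrow>
     (\<forall>x\<in>M. h x \<in> N) \<and> (\<forall>x\<in>M. \<forall>y\<in>M. h (x + y) = h x + h y) \<and>
     (\<forall>r. \<forall>x\<in>M. h (s r x) = t r (h x))"

definition free_carrier :: "nat \<Rightarrow> (nat \<Rightarrow> 'r::ring_1) set" where
  "free_carrier n = {v. \<forall>k\<ge>n. v k = 0}"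

definition free_smult :: "'r::ring_1 \<Rightarrow> (nat \<Rightarrow> 'r) \<Rightarrow> (nat \<Rightarrow> 'r)" where
  "free_smult r v = (\<lambda>k. r * v k)"

definition fg_projective :: "'m set \<Rightarrow> ('r::ring_1 \<Rightarrow> 'm::ab_group_add \<Rightarrow> 'm) \<Rightarrow> bool" where
  "fg_projective M s \<longleftrightarrow> lmodule M s \<and>
     (\<exists>n::nat. \<exists>i p. lhom M s (free_carrier n) free_smult i \<and>
                     lhom (free_carrier n) free_smult M s p \<and>
                     (\<forall>x\<in>M. p (i x) = x))"

text \<open>The integral group ring Z[pi] of a group pi (written additively as a type of class
  group_add; the ring product of finitely supported functions is convolution over the group law).
  Its standard involution sends sum a_g g to sum a_g g^{-1}.\<close>

type_synonym 'g grpring = "'g \<Rightarrow>\<^sub>0 int"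

definition grp_conj :: "'g::group_add grpring \<Rightarrow> 'g grpring" where
  "grp_conj x = Abs_poly_mapping (\<lambda>g. Poly_Mapping.lookup x (- g))"

text \<open>Dual module Hom_\<Lambda>(M,\<Lambda>): \<Lambda>-linear functionals (extensional, i.e. 0 outside M),
  made into a left module via the involution: (\<lambda>.\<phi>)(x) = \<phi>(x) * conj \<lambda>.\<close>

definition dual_carrier :: "'m::ab_group_add set \<Rightarrow> ('g::group_add grpring \<Rightarrow> 'm \<Rightarrow> 'm)
    \<Rightarrow> ('m \<Rightarrow> 'g grpring) set" where
  "dual_carrier M s = {\<phi>. lhom M s UNIV (*) \<phi> \<and> (\<forall>x. x \<notin> M \<longrightarrow> \<phi> x = 0)}"

definition dual_smult :: "'m::ab_group_add set \<Rightarrow> 'g::group_add grpring \<Rightarrow> ('m \<Rightarrow> 'g grpring)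
    \<Rightarrow> ('m \<Rightarrow> 'g grpring)" where
  "dual_smult M r \<phi> = (\<lambda>x. if x \<in> M then \<phi> x * grp_conj r else 0)"

definition dual_map :: "'m set \<Rightarrow> ('m \<Rightarrow> 'n) \<Rightarrow> ('n \<Rightarrow> 'g::group_add grpring) \<Rightarrow> ('m \<Rightarrow> 'g grpring)" where
  "dual_map M h \<phi> = (\<lambda>x. if x \<in> M then \<phi> (h x) else 0)"

text \<open>For f : L \<rightarrow> D^1, the map f^* : D_1 \<cong> Hom(D^1,\<Lambda>) \<rightarrow> Hom(L,\<Lambda>), where the canonical
  isomorphism D_1 \<rightarrow> Hom(D^1,\<Lambda>) is x \<mapsto> (\<phi> \<mapsto> conj(\<phi> x)).\<close>

definition dual_star :: "'l set \<Rightarrow> ('l \<Rightarrow> ('d \<Rightarrow> 'g::group_add grpring)) \<Rightarrow> 'd \<Rightarrow> ('l \<Rightarrow> 'g grpring)" where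
  "dual_star L f x = (\<lambda>l. if l \<in> L then grp_conj (f l x) else 0)"

end

theory Submission
  imports Defs
begin

text \<open>If x = d2 y then every f l, lying in ker d^2, vanishes on x. Conversely, let
  f^*(x) = 0, i.e. every f l vanishes on x. For any functional \<phi> on D_0, the pullback \<phi> \<circ> d_1 is
  killed by d^2 since d_1 d_2 = 0, hence lies in f(L), so \<phi>(d_1 x) = 0. Functionals separate the
  points of the projective module D_0 (use the coordinates of an embedding into \<Lambda>^n), so
  d_1 x = 0 and x \<in> im d_2 by exactness.\<close>

lemma lookup_grp_conj: "Poly_Mapping.lookup (grp_conj x) g = Poly_Mapping.lookup x (- g)"
proof -
  have "{g. Poly_Mapping.lookup x (- g) \<noteq> 0} = uminus ` {g. Poly_Mapping.lookup x g \<noteq> 0}"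
    by (auto intro!: image_eqI[where x="- _"])
  then have "finite {g. Poly_Mapping.lookup x (- g) \<noteq> 0}"
    using finite_lookup by simp
  then show ?thesis
    unfolding grp_conj_def by (simp add: Abs_poly_mapping_inverse)
qed

lemma grp_conj_eq_0_iff [simp]: "grp_conj x = 0 \<longleftrightarrow> x = 0"
proof
  assume "grp_conj x = 0"
  then have "Poly_Mapping.lookup x (- g) = 0" for g
    by (metis lookup_grp_conj lookup_zero)
  then show "x = 0"
    by (metis minus_minus lookup_zero poly_mapping_eqI)
qed (simp add: poly_mapping_eqI lookup_grp_conj)

lemma dual_star_eq_0_iff: "dual_star L f x = 0 \<longleftrightarrow> (\<forall>l\<in>L. f l x = 0)"
  unfolding dual_star_def by (auto simp: fun_eq_iff)

lemma lhom_zero: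
  assumes "lhom M s N t h" and "0 \<in> M"
  shows "h 0 = 0"
proof -
  have "h (0 + 0) = h 0 + h 0"
    using assms unfolding lhom_def by blast
  then show ?thesis by simp
qed

lemma dual_map_in_dual_carrier:
  assumes "lmodule M s" and "lhom M s N t h" and "\<phi> \<in> dual_carrier N t"
  shows "dual_map M h \<phi> \<in> dual_carrier M s"
  using assms unfolding dual_carrier_def dual_map_def lhom_def lmodule_def by auto

lemma dual_map_dual_map_eq_0:
  assumes "\<forall>y\<in>M. g y \<in> N \<and> h (g y) = 0" and "\<phi> 0 = 0"
  shows "dual_map M g (dual_map N h \<phi>) = 0"
  using assms unfolding dual_map_def by (auto simp: fun_eq_iff)

lemma free_coordinate_in_dual_carrier:
  assumes "lmodule M s" and "lhom M s (free_carrier n) free_smult i"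
  shows "(\<lambda>z. if z \<in> M then i z k else 0) \<in> dual_carrier M s"
  using assms unfolding dual_carrier_def lhom_def lmodule_def free_smult_def by auto

lemma fg_projective_separated_by_duals:
  assumes "fg_projective M s" and "z \<in> M" and "\<forall>\<phi>\<in>dual_carrier M s. \<phi> z = 0"
  shows "z = 0"
proof -
  obtain n i p where M: "lmodule M s"
    and i: "lhom M s (free_carrier n) free_smult i"
    and p: "lhom (free_carrier n) free_smult M s p"
    and retract: "\<forall>x\<in>M. p (i x) = x"
    using assms(1) unfolding fg_projective_def by blast
  have "i z k = 0" for k
    using assms(2,3) free_coordinate_in_dual_carrier[OF M i, of k] by force
  then have "i z = 0" by auto
  moreover have "p 0 = 0"
    using p by (rule lhom_zero) (simp add: free_carrier_def)
  ultimately show ?thesis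
    using retract assms(2) by metis
qed

theorem lemma5p6:
  fixes D0 :: "'d0::ab_group_add set" and s0 :: "'g::group_add grpring \<Rightarrow> 'd0 \<Rightarrow> 'd0"
    and D1 :: "'d1::ab_group_add set" and s1 :: "'g grpring \<Rightarrow> 'd1 \<Rightarrow> 'd1"
    and D2 :: "'d2::ab_group_add set" and s2 :: "'g grpring \<Rightarrow> 'd2 \<Rightarrow> 'd2"
    and L :: "'l::ab_group_add set" and sL :: "'g grpring \<Rightarrow> 'l \<Rightarrow> 'l"
    and d1 :: "'d1 \<Rightarrow> 'd0" and d2 :: "'d2 \<Rightarrow> 'd1"
    and f :: "'l \<Rightarrow> ('d1 \<Rightarrow> 'g grpring)"
  assumes P0: "fg_projective D0 s0"
    and P1: "fg_projective D1 s1"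
    and P2: "fg_projective D2 s2"
    and hd1: "lhom D1 s1 D0 s0 d1"
    and hd2: "lhom D2 s2 D1 s1 d2"
    and exact: "d2 ` D2 = {x \<in> D1. d1 x = 0}"
    and modL: "lmodule L sL"
    and hf: "lhom L sL (dual_carrier D1 s1) (dual_smult D1) f"
    and imf: "f ` L = {\<phi> \<in> dual_carrier D1 s1. dual_map D2 d2 \<phi> = 0}"
  shows "d2 ` D2 = {x \<in> D1. dual_star L f x = 0}"
proof (intro equalityI subsetI)
  fix x assume "x \<in> d2 ` D2"
  then obtain y where y: "y \<in> D2" "x = d2 y" by blast
  have "f l x = 0" if "l \<in> L" for l
  proof -
    have "dual_map D2 d2 (f l) = 0"
      using imf that by blast
    then have "dual_map D2 d2 (f l) y = 0"
      by simp
    then show ?thesis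
      using y by (simp add: dual_map_def)
  qed
  then show "x \<in> {x \<in> D1. dual_star L f x = 0}"
    using exact y by (auto simp: dual_star_eq_0_iff)
next
  fix x assume "x \<in> {x \<in> D1. dual_star L f x = 0}"
  then have x: "x \<in> D1" and vanish: "\<forall>l\<in>L. f l x = 0"
    by (auto simp: dual_star_eq_0_iff)
  have M0: "lmodule D0 s0" and M1: "lmodule D1 s1"
    using P0 P1 unfolding fg_projective_def by auto
  have "\<phi> (d1 x) = 0" if \<phi>: "\<phi> \<in> dual_carrier D0 s0" for \<phi>
  proof -
    have "\<phi> 0 = 0"
      using \<phi> M0 unfolding dual_carrier_def lmodule_def by (auto intro: lhom_zero)
    then have "dual_map D1 d1 \<phi> \<in> f ` L"
      using imf exact dual_map_in_dual_carrier[OF M1 hd1 \<phi>]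
        dual_map_dual_map_eq_0[of D2 d2 D1 d1] by fastforce
    then obtain l where "l \<in> L" and "dual_map D1 d1 \<phi> x = f l x" by auto
    then show ?thesis
      using vanish x by (simp add: dual_map_def)
  qed
  then have "d1 x = 0"
    using fg_projective_separated_by_duals[OF P0] hd1 x unfolding lhom_def by blast
  then show "x \<in> d2 ` D2"
    using exact x by blast
qed

end
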